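(* Let $k\ge2$, let $\Pi\subseteq\mathfrak S_k$ be a nonoverlapping set of patterns, and let $I$ be a finite set of positive integers with $m=\max(I\cup\{0\})$. Then there is a function $g$ in the $\mathbb Q$-vector space $V_\Pi$ spanned by the functions $n\mapsto n^{j}\,\mathrm{av}_\Pi(n+l)$ ($j\in\mathbb Z_{\ge0}$, $l\in\mathbb Z$) such that $\#\Pi(I;n)=g(n)$ for all integers $n\ge m+k-1$.
   Context: Two integer sequences $a_1\cdots a_k$ and $b_1\cdots b_k$ are order isomorphic if $a_i<a_j\iff b_i<b_j$ for all $i,j$. For $\sigma\in\mathfrak S_k$, a permutation $\pi\in\mathfrak S_n$ contains a consecutive copy of $\sigma$ at index $i$ if $\pi_i\pi_{i+1}\cdots\pi_{i+k-1}$ is order isomorphic to $\sigma$. For a set $\Pi$ of patterns, $\Pi(I;n)$ is the set of $\pi\in\mathfrak S_n$ such that the set of indices $i$ at which $\pi$ contains a consecutive copy of some $\sigma\in\Pi$ is exactly $I$, and $\mathrm{av}_\Pi(n)=\#\Pi(\emptyset;n)$ (with $\mathrm{av}_\Pi(n)$ understood as $\#\Pi(\emptyset;n)$ for all integers $n\ge0$). $\Pi\subseteq\mathfrak S_k$ is nonoverlapping if for all (not necessarily distinct) $\sigma,\tau\in\Pi$ and every $l$ with $1<l<k$, the length-$l$ prefix of $\sigma$ is not order isomorphic to the length-$l$ suffix of $\tau$. *)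

theory Defs
  imports "HOL-Combinatorics.Multiset_Permutations"
begin

text \<open>Permutations of [n] are represented as lists: the elements of
  permutations_of_set {1..n}, i.e. the one-line notation pi_1 ... pi_n.\<close>

definition order_iso :: "nat list \<Rightarrow> nat list \<Rightarrow> bool" where
  "order_iso a b \<longleftrightarrow> length a = length b \<and>
     (\<forall>i < length a. \<forall>j < length a. (a ! i < a ! j \<longleftrightarrow> b ! i < b ! j))"

definition occ_set :: "nat \<Rightarrow> nat list set \<Rightarrow> nat list \<Rightarrow> nat set" where
  "occ_set k P p = {i. 1 \<le> i \<and> i + k - 1 \<le> length p \<and>
      (\<exists>\<sigma>\<in>P. order_iso (take k (drop (i - 1) p)) \<sigma>)}"

definition PiI :: "nat \<Rightarrow> nat list set \<Rightarrow> nat set \<Rightarrow> nat \<Rightarrow> nat list set" where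
  "PiI k P I n = {p \<in> permutations_of_set {1..n}. occ_set k P p = I}"

text \<open>av on integers; for negative arguments (no permutations) it is 0.\<close>
definition av :: "nat \<Rightarrow> nat list set \<Rightarrow> int \<Rightarrow> nat" where
  "av k P n = (if n < 0 then 0 else card (PiI k P {} (nat n)))"

definition nonoverlapping :: "nat \<Rightarrow> nat list set \<Rightarrow> bool" where
  "nonoverlapping k P \<longleftrightarrow> (\<forall>\<sigma>\<in>P. \<forall>\<tau>\<in>P. \<forall>l. 1 < l \<and> l < k \<longrightarrow>
      \<not> order_iso (take l \<sigma>) (drop (k - l) \<tau>))"

end

theory Submission
  imports Defs "HOL-Library.Infinite_Set"
begin

text \<open>Cutting a permutation of [n] after its p-th entry and standardizing both blocks shows
  that the permutations whose first block has occurrence set A and whose second block has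
  occurrence set B number C(n,p) #Pi(A;p) #Pi(B;n-p). Their occurrence set is A, the shift of B
  by p, and some occurrences straddling the cut; for nonoverlapping patterns at most one straddling
  occurrence is compatible with an occurrence next to the cut. Writing I = I' \<union> {m} with
  m = max I, this gives #Pi(I;n) = 0 if some occurrence of I' overlaps the one at m,
  #Pi(I;n) = C(n,m) #Pi(I';m) av(n-m) - #Pi(I';n) if m-k+1 \<in> I', and otherwise
  #Pi(I;n) = C(n,m-1) #Pi(I';m-1) #Pi({1};n-m+1) - #Pi(I \<union> {m-k+1};n), where
  #Pi({1};N) = N av(1) av(N-1) - av(N) and the last term (absent if k > m) falls under the
  previous case. Since C(n,m) is a polynomial in n, induction on m puts every #Pi(I;-) in V_Pi.\<close>

lemma order_iso_sym: "order_iso a b \<Longrightarrow> order_iso b a"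
  unfolding order_iso_def by auto

lemma order_iso_trans: "order_iso a b \<Longrightarrow> order_iso b c \<Longrightarrow> order_iso a c"
  unfolding order_iso_def by auto

lemma order_iso_take: "order_iso a b \<Longrightarrow> order_iso (take l a) (take l b)"
  unfolding order_iso_def by auto

lemma order_iso_drop: "order_iso a b \<Longrightarrow> order_iso (drop l a) (drop l b)"
  unfolding order_iso_def by auto

lemma order_iso_map_strict_mono:
  assumes "strict_mono_on (set w) f"
  shows "order_iso (map f w) w"
  unfolding order_iso_def using strict_mono_on_less[OF assms] by (simp add: nth_mem)

lemma occ_set_map_strict_mono:
  assumes "strict_mono_on (set w) f"
  shows "occ_set k P (map f w) = occ_set k P w"
proof -
  have "order_iso (take k (drop (i - 1) (map f w))) (take k (drop (i - 1) w))" for i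
    unfolding take_map drop_map
    by (rule order_iso_map_strict_mono, rule monotone_on_subset[OF assms])
       (meson in_set_dropD in_set_takeD subsetI)
  then show ?thesis
    unfolding occ_set_def by (auto dest: order_iso_sym intro: order_iso_trans)
qed

lemma occ_set_take:
  assumes "k \<ge> 1" "p \<le> length \<pi>"
  shows "occ_set k P (take p \<pi>) = {i \<in> occ_set k P \<pi>. i + k - 1 \<le> p}"
proof -
  have "take k (drop (i - 1) (take p \<pi>)) = take k (drop (i - 1) \<pi>)" if "1 \<le> i" "i + k - 1 \<le> p" for i
  proof -
    have "k \<le> Suc p - i" using that by linarith
    then show ?thesis using that by (simp add: drop_take take_take min_def)
  qed
  then show ?thesis unfolding occ_set_def using assms by auto
qed

lemma occ_set_drop:
  assumes "k \<ge> 1"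
  shows "occ_set k P (drop p \<pi>) = {i. 1 \<le> i \<and> i + p \<in> occ_set k P \<pi>}"
proof -
  have "drop (i - 1) (drop p \<pi>) = drop (i + p - 1) \<pi>" if "1 \<le> i" for i
    using that by (simp add: add.commute)
  then show ?thesis unfolding occ_set_def using assms by auto
qed

lemma occ_set_ge_1: "i \<in> occ_set k P \<pi> \<Longrightarrow> 1 \<le> i"
  unfolding occ_set_def by auto

lemma occ_set_nonoverlapping:
  assumes no: "nonoverlapping k P" and i: "i \<in> occ_set k P \<pi>" and j: "j \<in> occ_set k P \<pi>"
    and "i < j"
  shows "i + k - 1 \<le> j"
proof (rule ccontr)
  assume "\<not> i + k - 1 \<le> j"
  obtain \<sigma> where \<sigma>: "\<sigma> \<in> P" "order_iso (take k (drop (i - 1) \<pi>)) \<sigma>" and "1 \<le> i"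
    using i unfolding occ_set_def by auto
  obtain \<tau> where \<tau>: "\<tau> \<in> P" "order_iso (take k (drop (j - 1) \<pi>)) \<tau>"
    using j unfolding occ_set_def by auto
  define l where "l = k - (j - i)"
  have l: "1 < l" "l < k" "k - l = j - i"
    using \<open>i < j\<close> \<open>\<not> i + k - 1 \<le> j\<close> \<open>1 \<le> i\<close> by (auto simp: l_def)
  have common: "drop (j - i) (take k (drop (i - 1) \<pi>)) = take l (take k (drop (j - 1) \<pi>))"
    using \<open>i < j\<close> \<open>1 \<le> i\<close> l by (simp add: drop_take take_take min_def l_def add.commute)
  have "order_iso (take l \<tau>) (drop (k - l) \<sigma>)"
    using order_iso_drop[OF \<sigma>(2), of "j - i"] order_iso_take[OF \<tau>(2), of l] common l(3)
    by (metis order_iso_sym order_iso_trans)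
  then show False
    using no \<sigma>(1) \<tau>(1) l unfolding nonoverlapping_def by blast
qed

lemma PiI_eq_empty_if_overlap:
  assumes "nonoverlapping k P" "i \<in> I" "j \<in> I" "i < j" "j < i + k - 1"
  shows "PiI k P I n = {}"
  using occ_set_nonoverlapping[OF assms(1), of i _ j] assms(2-5) unfolding PiI_def by auto

lemma card_occ_set_perms_image:
  assumes "strict_mono_on A f"
  shows "card {ys \<in> permutations_of_set (f ` A). occ_set k P ys = C}
       = card {xs \<in> permutations_of_set A. occ_set k P xs = C}"
proof -
  have inj: "inj_on f A"
    using assms by (rule strict_mono_on_imp_inj_on)
  have "{ys \<in> permutations_of_set (f ` A). occ_set k P ys = C}
      = map f ` {xs \<in> permutations_of_set A. occ_set k P xs = C}"
  proof -
    have "occ_set k P (map f xs) = occ_set k P xs" if "xs \<in> permutations_of_set A" for xs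
      using that assms by (intro occ_set_map_strict_mono) (simp add: permutations_of_set_def)
    then show ?thesis
      unfolding permutations_of_set_image_inj[OF inj] by force
  qed
  moreover have "inj_on (map f) (permutations_of_set A)"
    by (rule inj_on_mapI) (use inj in \<open>auto simp: permutations_of_set_def\<close>)
  ultimately show ?thesis
    by (simp add: card_image inj_on_subset)
qed

lemma card_occ_set_perms_eq_card_PiI:
  assumes "finite S"
  shows "card {xs \<in> permutations_of_set S. occ_set k P xs = C} = card (PiI k P C (card S))"
proof -
  obtain h where h: "bij_betw h {..<card S} S" "strict_mono_on {..<card S} h"
    using ex_bij_betw_strict_mono_card[OF assms] by blast
  have "card {xs \<in> permutations_of_set S. occ_set k P xs = C}
      = card {xs \<in> permutations_of_set {..<card S}. occ_set k P xs = C}"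
    using card_occ_set_perms_image[OF h(2)] h(1) by (simp add: bij_betw_def)
  also have "\<dots> = card {xs \<in> permutations_of_set (Suc ` {..<card S}). occ_set k P xs = C}"
    by (rule card_occ_set_perms_image[symmetric]) (simp add: strict_mono_onI)
  also have "Suc ` {..<card S} = {1..card S}"
    by (simp add: lessThan_atLeast0 atLeastLessThanSuc_atLeastAtMost[symmetric])
  finally show ?thesis
    unfolding PiI_def .
qed

lemma permutations_of_set_split:
  assumes "p \<le> card U"
  shows "{\<pi> \<in> permutations_of_set U. take p \<pi> \<in> X \<and> drop p \<pi> \<in> Y}
       = (\<lambda>(xs, ys). xs @ ys) `
           (\<Union>T\<in>{T. T \<subseteq> U \<and> card T = p}. (permutations_of_set T \<inter> X) \<times> (permutations_of_set (U - T) \<inter> Y))"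
    (is "?L = ?R")
proof (intro equalityI subsetI)
  fix \<pi> assume \<pi>: "\<pi> \<in> ?L"
  then have "distinct \<pi>" "set \<pi> = U" "p \<le> length \<pi>"
    using assms length_finite_permutations_of_set[of \<pi> U] by (auto simp: permutations_of_set_def)
  moreover have "set (take p \<pi>) \<inter> set (drop p \<pi>) = {}"
    using \<open>distinct \<pi>\<close> by (metis append_take_drop_id distinct_append)
  moreover have "set \<pi> = set (take p \<pi>) \<union> set (drop p \<pi>)"
    by (metis append_take_drop_id set_append)
  ultimately show "\<pi> \<in> ?R"
    using \<pi> distinct_card[of "take p \<pi>"]
    by (auto simp: permutations_of_set_def intro!: image_eqI[of _ _ "(take p \<pi>, drop p \<pi>)"])
next
  fix \<pi> assume "\<pi> \<in> ?R"
  then obtain T xs ys where "T \<subseteq> U" "card T = p" "xs \<in> permutations_of_set T \<inter> X"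
    "ys \<in> permutations_of_set (U - T) \<inter> Y" "\<pi> = xs @ ys"
    by auto
  moreover have "length xs = p"
    using calculation by (auto dest: length_finite_permutations_of_set)
  ultimately show "\<pi> \<in> ?L"
    by (auto simp: permutations_of_set_def)
qed

lemma card_perms_split:
  assumes "p \<le> n"
  shows "card {\<pi> \<in> permutations_of_set {1..n}. occ_set k P (take p \<pi>) = A \<and> occ_set k P (drop p \<pi>) = B}
       = (n choose p) * card (PiI k P A p) * card (PiI k P B (n - p))"
proof -
  define U where "U = {1..n}"
  define Ts where "Ts = {T. T \<subseteq> U \<and> card T = p}"
  define X where "X T = {xs \<in> permutations_of_set T. occ_set k P xs = A}" for T
  define Y where "Y T = {ys \<in> permutations_of_set (U - T). occ_set k P ys = B}" for T
  have "{\<pi> \<in> permutations_of_set U. occ_set k P (take p \<pi>) = A \<and> occ_set k P (drop p \<pi>) = B}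
      = (\<lambda>(xs, ys). xs @ ys) ` (\<Union>T\<in>Ts. X T \<times> Y T)"
    using permutations_of_set_split[of p U "{xs. occ_set k P xs = A}" "{ys. occ_set k P ys = B}"] assms
    by (simp add: U_def Ts_def X_def Y_def Int_def conj_commute)
  moreover have "inj_on (\<lambda>(xs, ys). xs @ ys) (\<Union>T\<in>Ts. X T \<times> Y T)"
  proof -
    have "length xs = p" if "T \<in> Ts" "xs \<in> X T" for T xs
      using that by (auto simp: Ts_def X_def dest: length_finite_permutations_of_set)
    then show ?thesis
      by (fastforce intro: inj_onI)
  qed
  moreover have "card (\<Union>T\<in>Ts. X T \<times> Y T) = (\<Sum>T\<in>Ts. card (X T) * card (Y T))"
  proof (subst card_UN_disjoint)
    show "finite Ts" by (simp add: Ts_def U_def)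
    show "\<forall>T\<in>Ts. finite (X T \<times> Y T)" by (simp add: X_def Y_def)
    show "\<forall>T\<in>Ts. \<forall>T'\<in>Ts. T \<noteq> T' \<longrightarrow> (X T \<times> Y T) \<inter> (X T' \<times> Y T') = {}"
      by (auto simp: X_def permutations_of_set_def)
  qed (simp add: card_cartesian_product)
  moreover have "card (X T) = card (PiI k P A p)" "card (Y T) = card (PiI k P B (n - p))" if "T \<in> Ts" for T
    using that card_occ_set_perms_eq_card_PiI[of T] card_occ_set_perms_eq_card_PiI[of "U - T"]
    by (auto simp: X_def Y_def Ts_def U_def card_Diff_subset finite_subset)
  moreover have "card Ts = n choose p"
    by (simp add: Ts_def U_def n_subsets)
  ultimately show ?thesis
    by (simp add: U_def card_image)
qed

text \<open>Starting positions of the windows of length k that contain both entry p and entry p + 1.\<close>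

definition straddling :: "nat \<Rightarrow> nat \<Rightarrow> nat set" where
  "straddling k p = {i. 1 \<le> i \<and> i \<le> p \<and> p < i + k - 1}"

lemma finite_straddling: "finite (straddling k p)"
  by (rule finite_subset[of _ "{..p}"]) (auto simp: straddling_def)

lemma occ_set_decompose:
  assumes "k \<ge> 1" "p \<le> length \<pi>"
  shows "occ_set k P \<pi>
       = occ_set k P (take p \<pi>) \<union> (occ_set k P \<pi> \<inter> straddling k p) \<union> (+) p ` occ_set k P (drop p \<pi>)"
    (is "_ = ?R")
proof
  show "occ_set k P \<pi> \<subseteq> ?R"
  proof
    fix i assume i: "i \<in> occ_set k P \<pi>"
    show "i \<in> ?R"
    proof (cases "p < i")
      case True
      then have "i - p \<in> occ_set k P (drop p \<pi>)" "i = p + (i - p)"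
        using i occ_set_drop[OF assms(1)] by auto
      then show ?thesis
        by blast
    next
      case False
      then show ?thesis
        using i occ_set_ge_1[OF i] occ_set_take[OF assms] by (auto simp: straddling_def)
    qed
  qed
  show "?R \<subseteq> occ_set k P \<pi>"
    using occ_set_take[OF assms] occ_set_drop[OF assms(1)] by (auto simp: add.commute)
qed

lemma occ_set_take_drop_eq_iff:
  assumes k: "k \<ge> 1" and "p \<le> length \<pi>"
    and A: "\<forall>i\<in>A. 1 \<le> i \<and> i + k - 1 \<le> p" and B: "\<forall>i\<in>B. 1 \<le> i"
  shows "occ_set k P (take p \<pi>) = A \<and> occ_set k P (drop p \<pi>) = B
    \<longleftrightarrow> (\<exists>S \<subseteq> straddling k p. occ_set k P \<pi> = A \<union> S \<union> (+) p ` B)"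
proof
  assume "occ_set k P (take p \<pi>) = A \<and> occ_set k P (drop p \<pi>) = B"
  then show "\<exists>S \<subseteq> straddling k p. occ_set k P \<pi> = A \<union> S \<union> (+) p ` B"
    using occ_set_decompose[OF assms(1,2), of P] by blast
next
  assume "\<exists>S \<subseteq> straddling k p. occ_set k P \<pi> = A \<union> S \<union> (+) p ` B"
  then obtain S where S: "S \<subseteq> straddling k p" and occ: "occ_set k P \<pi> = A \<union> S \<union> (+) p ` B"
    by blast
  have "{i \<in> occ_set k P \<pi>. i + k - 1 \<le> p} = A"
    using S A B k unfolding occ by (auto simp: straddling_def)
  moreover have "{i. 1 \<le> i \<and> i + p \<in> occ_set k P \<pi>} = B"
    using S A B k unfolding occ by (auto simp: straddling_def add.commute)
  ultimately show "occ_set k P (take p \<pi>) = A \<and> occ_set k P (drop p \<pi>) = B"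
    using occ_set_take[OF assms(1,2)] occ_set_drop[OF assms(1)] by simp
qed

lemma card_perms_split_eq_sum_straddling:
  assumes k: "k \<ge> 1" and "p \<le> n"
    and A: "\<forall>i\<in>A. 1 \<le> i \<and> i + k - 1 \<le> p" and B: "\<forall>i\<in>B. 1 \<le> i"
  shows "card {\<pi> \<in> permutations_of_set {1..n}. occ_set k P (take p \<pi>) = A \<and> occ_set k P (drop p \<pi>) = B}
       = (\<Sum>S\<in>Pow (straddling k p). card (PiI k P (A \<union> S \<union> (+) p ` B) n))"
proof -
  have "{\<pi> \<in> permutations_of_set {1..n}. occ_set k P (take p \<pi>) = A \<and> occ_set k P (drop p \<pi>) = B}
      = (\<Union>S\<in>Pow (straddling k p). PiI k P (A \<union> S \<union> (+) p ` B) n)"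
    (is "?L = ?R")
  proof (rule set_eqI)
    show "\<pi> \<in> ?L \<longleftrightarrow> \<pi> \<in> ?R" for \<pi>
    proof (cases "\<pi> \<in> permutations_of_set {1..n}")
      case True
      then have "p \<le> length \<pi>"
        using \<open>p \<le> n\<close> by (simp add: length_finite_permutations_of_set)
      with True show ?thesis
        using occ_set_take_drop_eq_iff[OF k _ A B, of \<pi> P] unfolding PiI_def by blast
    qed (simp add: PiI_def)
  qed
  moreover have "(A \<union> S \<union> (+) p ` B) \<inter> straddling k p = S" if "S \<subseteq> straddling k p" for S
    using that A B by (auto simp: straddling_def)
  then have "PiI k P (A \<union> S \<union> (+) p ` B) n \<inter> PiI k P (A \<union> S' \<union> (+) p ` B) n = {}"
    if "S \<subseteq> straddling k p" "S' \<subseteq> straddling k p" "S \<noteq> S'" for S S'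
    using that unfolding PiI_def by blast
  ultimately show ?thesis
    by (simp add: card_UN_disjoint PiI_def finite_straddling)
qed

lemma sum_Pow_eq_sum_Pow_Int:
  assumes "finite U" and "\<And>S. S \<subseteq> U \<Longrightarrow> \<not> S \<subseteq> X \<Longrightarrow> f S = 0"
  shows "(\<Sum>S\<in>Pow U. f S) = (\<Sum>S\<in>Pow (U \<inter> X). f S)"
  by (rule sum.mono_neutral_right) (use assms in auto)

lemma card_PiI_insert_adjacent:
  assumes k: "k \<ge> 2" and no: "nonoverlapping k P"
    and A: "\<forall>i\<in>A. 1 \<le> i \<and> i + k - 1 \<le> q" and q: "q = 1 \<or> (k \<le> q \<and> q - k + 1 \<in> A)"
    and "q \<le> n"
  shows "card (PiI k P A n) + card (PiI k P (insert q A) n)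
       = (n choose q) * card (PiI k P A q) * card (PiI k P {} (n - q))"
proof -
  have "(n choose q) * card (PiI k P A q) * card (PiI k P {} (n - q))
      = (\<Sum>S\<in>Pow (straddling k q). card (PiI k P (A \<union> S \<union> (+) q ` {}) n))"
    using card_perms_split[OF \<open>q \<le> n\<close>, of k P A "{}"]
      card_perms_split_eq_sum_straddling[OF _ \<open>q \<le> n\<close> A, of "{}" P] k
    by simp
  also have "\<dots> = (\<Sum>S\<in>Pow (straddling k q \<inter> {q}). card (PiI k P (A \<union> S \<union> (+) q ` {}) n))"
  proof (rule sum_Pow_eq_sum_Pow_Int[OF finite_straddling])
    fix S assume "S \<subseteq> straddling k q" "\<not> S \<subseteq> {q}"
    then obtain s where "s \<in> S" "s \<noteq> q" "s \<in> straddling k q"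
      by auto
    then have "1 \<le> s" "s < q" "q < s + k - 1"
      by (auto simp: straddling_def)
    with q have "q - k + 1 \<in> A" "q - k + 1 < s" "s < q - k + 1 + k - 1"
      by auto
    with \<open>s \<in> S\<close> show "card (PiI k P (A \<union> S \<union> (+) q ` {}) n) = 0"
      by (simp add: PiI_eq_empty_if_overlap[OF no, of "q - k + 1" _ s])
  qed
  also have "straddling k q \<inter> {q} = {q}"
    using q k by (auto simp: straddling_def)
  finally show ?thesis
    by (simp add: Pow_insert)
qed

lemma card_PiI_insert_isolated:
  assumes k: "k \<ge> 2" and no: "nonoverlapping k P"
    and A: "\<forall>i\<in>A. 1 \<le> i \<and> i + k - 1 < m" and "1 \<le> m" "m \<le> n + 1"
  shows "card (PiI k P (insert m A) n)
         + (if k \<le> m then card (PiI k P (insert (m - k + 1) (insert m A)) n) else 0)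
       = (n choose (m - 1)) * card (PiI k P A (m - 1)) * card (PiI k P {1} (n + 1 - m))"
proof -
  have shift: "(+) (m - 1) ` {1} = {m}" and "n - (m - 1) = n + 1 - m" and "m - 1 \<le> n"
    using assms(4,5) by auto
  have A': "\<forall>i\<in>A. 1 \<le> i \<and> i + k - 1 \<le> m - 1"
    using A by fastforce
  have "(n choose (m - 1)) * card (PiI k P A (m - 1)) * card (PiI k P {1} (n + 1 - m))
      = (\<Sum>S\<in>Pow (straddling k (m - 1)). card (PiI k P (A \<union> S \<union> {m}) n))"
    using card_perms_split[OF \<open>m - 1 \<le> n\<close>, of k P A "{1}"]
      card_perms_split_eq_sum_straddling[OF _ \<open>m - 1 \<le> n\<close> A', of "{1}" P] k
    unfolding shift \<open>n - (m - 1) = n + 1 - m\<close> by simp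
  also have "\<dots> = (\<Sum>S\<in>Pow (straddling k (m - 1) \<inter> {i. i + k - 1 = m}). card (PiI k P (A \<union> S \<union> {m}) n))"
  proof (rule sum_Pow_eq_sum_Pow_Int[OF finite_straddling])
    fix S assume "S \<subseteq> straddling k (m - 1)" "\<not> S \<subseteq> {i. i + k - 1 = m}"
    then obtain s where "s \<in> S" "s + k - 1 \<noteq> m" "s \<in> straddling k (m - 1)"
      by auto
    then have "s < m" "m < s + k - 1"
      by (auto simp: straddling_def)
    with \<open>s \<in> S\<close> show "card (PiI k P (A \<union> S \<union> {m}) n) = 0"
      by (simp add: PiI_eq_empty_if_overlap[OF no, of s _ m])
  qed
  also have "straddling k (m - 1) \<inter> {i. i + k - 1 = m} = (if k \<le> m then {m - k + 1} else {})"
    using k \<open>1 \<le> m\<close> by (auto simp: straddling_def)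
  finally show ?thesis
    using A k by (auto simp: Pow_insert insert_commute)
qed

lemma card_PiI_empty_eq_av: "m \<le> n \<Longrightarrow> card (PiI k P {} (n - m)) = av k P (int n - int m)"
  by (simp add: av_def flip: of_nat_diff)

lemma card_PiI_singleton_1_shifted:
  assumes k: "k \<ge> 2" and no: "nonoverlapping k P" and "m \<le> n"
  shows "rat_of_nat (card (PiI k P {1} (n + 1 - m)))
       = (of_nat n + (1 - of_nat m)) * (of_nat (card (PiI k P {} 1)) * of_nat (av k P (int n - int m)))
         - of_nat (av k P (int n + (1 - int m)))"
proof -
  define N where "N = n + 1 - m"
  have "card (PiI k P {} N) + card (PiI k P {1} N) = N * card (PiI k P {} 1) * card (PiI k P {} (N - 1))"
    using card_PiI_insert_adjacent[OF k no, of "{}" 1 N] \<open>m \<le> n\<close> by (simp add: N_def)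
  also have "card (PiI k P {} (N - 1)) = av k P (int n - int m)"
    using card_PiI_empty_eq_av[OF \<open>m \<le> n\<close>] by (simp add: N_def)
  also have "card (PiI k P {} N) = av k P (int n + (1 - int m))"
    using card_PiI_empty_eq_av[of m "Suc n"] \<open>m \<le> n\<close> by (simp add: N_def algebra_simps)
  finally have "rat_of_nat (card (PiI k P {1} N))
      = of_nat N * (of_nat (card (PiI k P {} 1)) * of_nat (av k P (int n - int m)))
        - of_nat (av k P (int n + (1 - int m)))"
    by (simp add: eq_diff_eq mult.assoc flip: of_nat_add of_nat_mult)
  moreover have "of_nat N = of_nat n + (1 - of_nat m :: rat)"
    using \<open>m \<le> n\<close> by (simp add: N_def of_nat_diff)
  ultimately show ?thesis
    by (simp add: N_def)
qed

definition av_monomial :: "nat \<Rightarrow> nat list set \<Rightarrow> nat \<times> int \<Rightarrow> nat \<Rightarrow> rat" where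
  "av_monomial k P jl n = of_nat n ^ fst jl * of_nat (av k P (int n + snd jl))"

definition av_span_from :: "nat \<Rightarrow> nat list set \<Rightarrow> nat \<Rightarrow> (nat \<Rightarrow> rat) \<Rightarrow> bool" where
  "av_span_from k P n0 f \<longleftrightarrow>
     (\<exists>F c. finite F \<and> (\<forall>n\<ge>n0. f n = (\<Sum>x\<in>F. c x * av_monomial k P x n)))"

lemma av_span_from_av: "av_span_from k P n0 (\<lambda>n. of_nat (av k P (int n + l)))"
  unfolding av_span_from_def av_monomial_def
  by (rule exI[of _ "{(0, l)}"], rule exI[of _ "\<lambda>_. 1"]) simp

lemma av_span_from_zero: "av_span_from k P n0 (\<lambda>n. 0)"
  unfolding av_span_from_def by (rule exI[of _ "{}"]) simp

lemma av_span_from_add: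
  assumes "av_span_from k P n0 f" "av_span_from k P n0 g"
  shows "av_span_from k P n0 (\<lambda>n. f n + g n)"
proof -
  obtain F c G d where F: "finite F" "\<forall>n\<ge>n0. f n = (\<Sum>x\<in>F. c x * av_monomial k P x n)"
    and G: "finite G" "\<forall>n\<ge>n0. g n = (\<Sum>x\<in>G. d x * av_monomial k P x n)"
    using assms unfolding av_span_from_def by blast
  define e where "e x = (if x \<in> F then c x else 0) + (if x \<in> G then d x else 0)" for x
  have split: "(\<Sum>x\<in>F \<union> G. e x * av_monomial k P x n)
      = (\<Sum>x\<in>F \<union> G. if x \<in> F then c x * av_monomial k P x n else 0)
        + (\<Sum>x\<in>F \<union> G. if x \<in> G then d x * av_monomial k P x n else 0)" for n
    unfolding e_def sum.distrib[symmetric] by (intro sum.cong) (auto simp: ring_distribs)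
  have "(\<Sum>x\<in>F \<union> G. if x \<in> F then c x * av_monomial k P x n else 0)
        + (\<Sum>x\<in>F \<union> G. if x \<in> G then d x * av_monomial k P x n else 0)
      = (\<Sum>x\<in>F. c x * av_monomial k P x n) + (\<Sum>x\<in>G. d x * av_monomial k P x n)" for n
    using F(1) G(1) by (simp add: sum.inter_restrict[symmetric] Int_absorb1 Int_absorb2)
  then show ?thesis
    unfolding av_span_from_def using F G split by (intro exI[of _ "F \<union> G"] exI[of _ e]) simp
qed

lemma av_span_from_scale:
  assumes "av_span_from k P n0 f"
  shows "av_span_from k P n0 (\<lambda>n. a * f n)"
proof -
  obtain F c where "finite F" "\<forall>n\<ge>n0. f n = (\<Sum>x\<in>F. c x * av_monomial k P x n)"
    using assms unfolding av_span_from_def by blast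
  then show ?thesis
    unfolding av_span_from_def
    by (intro exI[of _ F] exI[of _ "\<lambda>x. a * c x"]) (simp add: sum_distrib_left mult.assoc)
qed

lemma av_span_from_diff:
  assumes "av_span_from k P n0 f" "av_span_from k P n0 g"
  shows "av_span_from k P n0 (\<lambda>n. f n - g n)"
  using av_span_from_add[OF assms(1) av_span_from_scale[OF assms(2), of "-1"]] by simp

lemma av_span_from_mult_of_nat:
  assumes "av_span_from k P n0 f"
  shows "av_span_from k P n0 (\<lambda>n. of_nat n * f n)"
proof -
  obtain F c where F: "finite F" "\<forall>n\<ge>n0. f n = (\<Sum>x\<in>F. c x * av_monomial k P x n)"
    using assms unfolding av_span_from_def by blast
  define up where "up = (\<lambda>(j :: nat, l :: int). (Suc j, l))"
  have "inj up"
    by (auto simp: up_def inj_def)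
  have reindex: "(\<Sum>y\<in>up ` F. c (fst y - 1, snd y) * av_monomial k P y n)
      = (\<Sum>x\<in>F. c x * av_monomial k P (up x) n)" for n
    using inj_on_subset[OF \<open>inj up\<close> subset_UNIV]
    by (subst sum.reindex) (auto simp: up_def split_beta)
  have "(\<Sum>x\<in>F. c x * av_monomial k P (up x) n) = of_nat n * (\<Sum>x\<in>F. c x * av_monomial k P x n)" for n
    by (simp add: sum_distrib_left up_def av_monomial_def split_beta algebra_simps)
  then show ?thesis
    unfolding av_span_from_def using F reindex
    by (intro exI[of _ "up ` F"] exI[of _ "\<lambda>y. c (fst y - 1, snd y)"]) simp
qed

lemma av_span_from_mult_affine:
  assumes "av_span_from k P n0 f"
  shows "av_span_from k P n0 (\<lambda>n. (of_nat n + a) * f n)"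
  using av_span_from_add[OF av_span_from_mult_of_nat[OF assms] av_span_from_scale[OF assms, of a]]
  by (simp add: ring_distribs)

lemma av_span_from_mult_choose:
  assumes "av_span_from k P n0 f"
  shows "av_span_from k P n0 (\<lambda>n. of_nat (n choose m) * f n)"
proof -
  have falling: "av_span_from k P n0 (\<lambda>n. (\<Prod>i<m. of_nat n - of_nat i) * f n)"
  proof (induction m)
    case 0
    then show ?case using assms by simp
  next
    case (Suc m)
    then show ?case
      using av_span_from_mult_affine[OF Suc, of "- of_nat m"] by (simp add: algebra_simps)
  qed
  have "of_nat (n choose m) = (\<Prod>i<m. of_nat n - of_nat i) / (fact m :: rat)" for n
    by (simp add: binomial_gbinomial gbinomial_prod_rev atLeast0LessThan)
  then show ?thesis
    using av_span_from_scale[OF falling, of "1 / fact m"] by simp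
qed

lemma av_span_from_mono: "av_span_from k P n0 f \<Longrightarrow> n0 \<le> n1 \<Longrightarrow> av_span_from k P n1 f"
  unfolding av_span_from_def by (meson order.trans)

lemma av_span_from_cong:
  "av_span_from k P n0 g \<Longrightarrow> (\<And>n. n0 \<le> n \<Longrightarrow> f n = g n) \<Longrightarrow> av_span_from k P n0 f"
  unfolding av_span_from_def by auto

lemma av_span_from_card_PiI_insert_adjacent:
  assumes k: "k \<ge> 2" and no: "nonoverlapping k P"
    and A: "\<forall>i\<in>A. 1 \<le> i \<and> i + k - 1 \<le> m" and "k \<le> m" "m - k + 1 \<in> A"
    and span: "av_span_from k P m (\<lambda>n. of_nat (card (PiI k P A n)))"
  shows "av_span_from k P (m + k - 1) (\<lambda>n. of_nat (card (PiI k P (insert m A) n)))"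
proof -
  let ?c = "of_nat (card (PiI k P A m)) :: rat"
  have "av_span_from k P (m + k - 1)
      (\<lambda>n. of_nat (n choose m) * (?c * of_nat (av k P (int n + - int m))) - of_nat (card (PiI k P A n)))"
    using k by (intro av_span_from_diff av_span_from_mult_choose av_span_from_scale av_span_from_av
        av_span_from_mono[OF span]) simp
  then show ?thesis
  proof (rule av_span_from_cong)
    fix n assume "m + k - 1 \<le> n"
    then have "m \<le> n"
      using k by simp
    have "card (PiI k P A n) + card (PiI k P (insert m A) n)
        = (n choose m) * card (PiI k P A m) * av k P (int n - int m)"
      using card_PiI_insert_adjacent[OF k no A _ \<open>m \<le> n\<close>] assms(4,5)
      by (simp add: card_PiI_empty_eq_av[OF \<open>m \<le> n\<close>])
    then show "of_nat (card (PiI k P (insert m A) n))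
        = of_nat (n choose m) * (?c * of_nat (av k P (int n + - int m))) - of_nat (card (PiI k P A n))"
      by (simp add: eq_diff_eq flip: of_nat_add of_nat_mult)
  qed
qed

lemma av_span_from_card_PiI_insert_isolated:
  assumes k: "k \<ge> 2" and no: "nonoverlapping k P"
    and A: "\<forall>i\<in>A. 1 \<le> i \<and> i + k - 1 < m" and "1 \<le> m"
    and span: "k \<le> m \<Longrightarrow>
      av_span_from k P (m + k - 1) (\<lambda>n. of_nat (card (PiI k P (insert (m - k + 1) (insert m A)) n)))"
  shows "av_span_from k P (m + k - 1) (\<lambda>n. of_nat (card (PiI k P (insert m A) n)))"
proof -
  define E where "E n = (if k \<le> m then card (PiI k P (insert (m - k + 1) (insert m A)) n) else 0)" for n
  have span_E: "av_span_from k P (m + k - 1) (\<lambda>n. of_nat (E n))"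
    using span av_span_from_zero by (cases "k \<le> m") (simp_all add: E_def)
  let ?b = "of_nat (card (PiI k P A (m - 1))) :: rat"
  let ?c = "of_nat (card (PiI k P {} 1)) :: rat"
  have "av_span_from k P (m + k - 1)
      (\<lambda>n. of_nat (n choose (m - 1)) * (?b * ((of_nat n + (1 - of_nat m)) * (?c * of_nat (av k P (int n + - int m)))
             - of_nat (av k P (int n + (1 - int m))))) - of_nat (E n))"
    by (intro av_span_from_diff av_span_from_mult_choose av_span_from_scale av_span_from_mult_affine
        av_span_from_av span_E)
  then show ?thesis
  proof (rule av_span_from_cong)
    fix n assume "m + k - 1 \<le> n"
    then have "m \<le> n"
      using k by simp
    have "card (PiI k P (insert m A) n) + E n
        = (n choose (m - 1)) * card (PiI k P A (m - 1)) * card (PiI k P {1} (n + 1 - m))"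
      using card_PiI_insert_isolated[OF k no A \<open>1 \<le> m\<close>] \<open>m \<le> n\<close> by (simp add: E_def)
    then have "of_nat (card (PiI k P (insert m A) n))
        = of_nat (n choose (m - 1)) * (?b * of_nat (card (PiI k P {1} (n + 1 - m)))) - of_nat (E n)"
      by (simp add: eq_diff_eq mult.assoc flip: of_nat_add of_nat_mult)
    then show "of_nat (card (PiI k P (insert m A) n))
        = of_nat (n choose (m - 1)) * (?b * ((of_nat n + (1 - of_nat m)) * (?c * of_nat (av k P (int n + - int m)))
             - of_nat (av k P (int n + (1 - int m))))) - of_nat (E n)"
      unfolding card_PiI_singleton_1_shifted[OF k no \<open>m \<le> n\<close>] by simp
  qed
qed

lemma av_span_from_card_PiI_insert_max:
  assumes k: "k \<ge> 2" and no: "nonoverlapping k P"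
    and "finite A" and A: "\<forall>i\<in>A. 1 \<le> i \<and> i < m" and "1 \<le> m"
    and below: "\<And>J. finite J \<Longrightarrow> \<forall>i\<in>J. 1 \<le> i \<and> i + k - 1 \<le> m \<Longrightarrow> m - k + 1 \<in> J
      \<Longrightarrow> k \<le> m \<Longrightarrow> av_span_from k P m (\<lambda>n. of_nat (card (PiI k P J n)))"
  shows "av_span_from k P (m + k - 1) (\<lambda>n. of_nat (card (PiI k P (insert m A) n)))"
proof -
  have adjacent: "av_span_from k P (m + k - 1) (\<lambda>n. of_nat (card (PiI k P (insert m J) n)))"
    if "finite J" "\<forall>i\<in>J. 1 \<le> i \<and> i + k - 1 \<le> m" "k \<le> m" "m - k + 1 \<in> J" for J
    using av_span_from_card_PiI_insert_adjacent[OF k no that(2-4) below[OF that(1,2,4,3)]] .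
  show ?thesis
  proof (cases "\<exists>i\<in>A. m < i + k - 1")
    case True
    then obtain i where "i \<in> A" "m < i + k - 1"
      by blast
    then have "PiI k P (insert m A) n = {}" for n
      using PiI_eq_empty_if_overlap[OF no, of i "insert m A" m] A by auto
    then show ?thesis
      using av_span_from_zero by simp
  next
    case False
    then have le: "\<forall>i\<in>A. i + k - 1 \<le> m"
      by (simp add: not_less)
    show ?thesis
    proof (cases "k \<le> m \<and> m - k + 1 \<in> A")
      case True
      moreover have "\<forall>i\<in>A. 1 \<le> i \<and> i + k - 1 \<le> m"
        using A le by blast
      ultimately show ?thesis
        using adjacent[OF \<open>finite A\<close>] by blast
    next
      case False
      have isolated: "\<forall>i\<in>A. 1 \<le> i \<and> i + k - 1 < m"
      proof
        fix i assume "i \<in> A"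
        then have "1 \<le> i" "i + k - 1 \<le> m"
          using A le by auto
        moreover have "i + k - 1 \<noteq> m"
        proof
          assume "i + k - 1 = m"
          then have "k \<le> m" "m - k + 1 = i"
            using \<open>1 \<le> i\<close> by auto
          with False \<open>i \<in> A\<close> show False
            by simp
        qed
        ultimately show "1 \<le> i \<and> i + k - 1 < m"
          by simp
      qed
      show ?thesis
      proof (rule av_span_from_card_PiI_insert_isolated[OF k no isolated \<open>1 \<le> m\<close>])
        assume "k \<le> m"
        moreover have "\<forall>i\<in>insert (m - k + 1) A. 1 \<le> i \<and> i + k - 1 \<le> m"
          using isolated \<open>k \<le> m\<close> by fastforce
        ultimately show "av_span_from k P (m + k - 1)
            (\<lambda>n. of_nat (card (PiI k P (insert (m - k + 1) (insert m A)) n)))"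
          using adjacent[of "insert (m - k + 1) A"] \<open>finite A\<close> by (simp add: insert_commute)
      qed
    qed
  qed
qed

lemma av_span_from_card_PiI:
  assumes k: "k \<ge> 2" and no: "nonoverlapping k P" and "finite I" and "\<forall>i\<in>I. 0 < i"
  shows "av_span_from k P (Max (I \<union> {0}) + k - 1) (\<lambda>n. of_nat (card (PiI k P I n)))"
proof -
  obtain m where "m = Max (I \<union> {0})"
    by blast
  with assms(3,4) show ?thesis
  proof (induction m arbitrary: I rule: less_induct)
    case (less m)
    show ?case
    proof (cases "I = {}")
      case True
      then show ?thesis
        using av_span_from_av[of k P _ 0] by (simp add: av_def)
    next
      case False
      have le_m: "\<forall>i\<in>I. i \<le> m"
        using less.prems by simp
      have "m \<in> I"
        using Max_in[of "I \<union> {0}"] le_m False less.prems by fastforce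
      define A where "A = I - {m}"
      have I: "I = insert m A" and "finite A" and A: "\<forall>i\<in>A. 1 \<le> i \<and> i < m"
        using \<open>m \<in> I\<close> less.prems(1,2) le_m by (fastforce simp: A_def)+
      have "av_span_from k P (m + k - 1) (\<lambda>n. of_nat (card (PiI k P (insert m A) n)))"
      proof (rule av_span_from_card_PiI_insert_max[OF k no \<open>finite A\<close> A])
        show "1 \<le> m"
          using \<open>m \<in> I\<close> less.prems(2) by fastforce
        fix J assume J: "finite J" "\<forall>i\<in>J. 1 \<le> i \<and> i + k - 1 \<le> m" "m - k + 1 \<in> J" "k \<le> m"
        have "Max (J \<union> {0}) = m - k + 1"
          using J by (intro Max_eqI) auto
        moreover have "m - k + 1 < m" "\<forall>i\<in>J. 0 < i"
          using J k by auto
        ultimately have "av_span_from k P (m - k + 1 + k - 1) (\<lambda>n. of_nat (card (PiI k P J n)))"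
          using less.IH[OF _ J(1)] by simp
        then show "av_span_from k P m (\<lambda>n. of_nat (card (PiI k P J n)))"
          using J(4) by simp
      qed
      then show ?thesis
        unfolding less.prems(3)[symmetric] unfolding I .
    qed
  qed
qed

theorem theorem6p1:
  fixes k :: nat and P :: "nat list set" and I :: "nat set"
  assumes "k \<ge> 2"
    and "P \<subseteq> permutations_of_set {1..k}"
    and "nonoverlapping k P"
    and "finite I" and "\<forall>i\<in>I. i > 0"
  shows "\<exists>F :: (nat \<times> int) set. \<exists>c :: nat \<times> int \<Rightarrow> rat. finite F \<and>
     (\<forall>n :: nat. n \<ge> Max (I \<union> {0}) + k - 1 \<longrightarrow>
        rat_of_nat (card (PiI k P I n)) =
          (\<Sum>(j, l)\<in>F. c (j, l) * (of_nat n) ^ j * of_nat (av k P (int n + l))))"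
  \<comment> \<open>Only the order types of the patterns matter.\<close>
  using av_span_from_card_PiI[OF assms(1,3-5)]
  unfolding av_span_from_def av_monomial_def by (simp add: split_beta mult.assoc)

end
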